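(* Let $\mathcal{A}$ be an association scheme with splitting field $L$, and let $E\subseteq\mathbb{C}$ be a field containing $L$ and closed under complex conjugation. For any Bose–Mesner algebra automorphism $\psi$ of $E[\mathcal{A}]$, the fixed-point space $\{M\in E[\mathcal{A}]: M^\psi=M\}$ equals $E[\mathcal{B}]$ for some subscheme $\mathcal{B}$ of $\mathcal{A}$.
   Context: An association scheme on $v$ vertices is a set $\mathcal{A}=\{A_0,\ldots,A_d\}$ of $v\times v$ $(0,1)$-matrices with $A_0=I$, $\sum_iA_i=J$, closed under transpose, pairwise commuting, and with all products $A_iA_j$ in the span of $\mathcal{A}$. Its principal idempotents are the pairwise orthogonal Hermitian idempotents $E_0,\dots,E_d$ summing to $I$ that form a basis of the span, with $A_iE_j=p_i(j)E_j$; the splitting field $L$ is $\mathbb{Q}(p_i(j):i,j)$. $E[\mathcal{A}]$ is the $E$-span of $\mathcal{A}$; $\circ$ is the Schur product. A Bose–Mesner algebra automorphism of $E[\mathcal{A}]$ is an invertible $E$-linear map $\psi$ with $(MN)^\psi=M^\psi N^\psi$, $(M\circ N)^\psi=M^\psi\circ N^\psi$ and $(M^* )^\psi=(M^\psi)^*$. A subscheme (fusion scheme) of $\mathcal{A}$ is an association scheme $\mathcal{B}=\{B_0,\ldots,B_e\}$ with $B_0=I$ and each $B_i=\sum_{j\in C_i}A_j$ for a partition $\{C_0=\{0\},C_1,\ldots,C_e\}$ of $\{0,\ldots,d\}$. *)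

theory Defs
  imports Complex_Main
begin

type_synonym 'v cmat = "'v \<Rightarrow> 'v \<Rightarrow> complex"

definition mmult :: "('v::finite) cmat \<Rightarrow> 'v cmat \<Rightarrow> 'v cmat" where
  "mmult M N = (\<lambda>i j. \<Sum>k\<in>UNIV. M i k * N k j)"

definition schur :: "'v cmat \<Rightarrow> 'v cmat \<Rightarrow> 'v cmat" where
  "schur M N = (\<lambda>i j. M i j * N i j)"

definition madd :: "'v cmat \<Rightarrow> 'v cmat \<Rightarrow> 'v cmat" where
  "madd M N = (\<lambda>i j. M i j + N i j)"

definition mscale :: "complex \<Rightarrow> 'v cmat \<Rightarrow> 'v cmat" where
  "mscale c M = (\<lambda>i j. c * M i j)"

definition mtrans :: "'v cmat \<Rightarrow> 'v cmat" where
  "mtrans M = (\<lambda>i j. M j i)"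

definition mstar :: "'v cmat \<Rightarrow> 'v cmat" where
  "mstar M = (\<lambda>i j. cnj (M j i))"

definition mid :: "'v cmat" where
  "mid = (\<lambda>i j. if i = j then 1 else 0)"

definition mones :: "'v cmat" where
  "mones = (\<lambda>i j. 1)"

definition mzero :: "'v cmat" where
  "mzero = (\<lambda>i j. 0)"

definition msum :: "('a \<Rightarrow> 'v cmat) \<Rightarrow> 'a set \<Rightarrow> 'v cmat" where
  "msum f S = (\<lambda>i j. \<Sum>k\<in>S. f k i j)"

definition lin_span :: "complex set \<Rightarrow> (nat \<Rightarrow> 'v cmat) \<Rightarrow> nat \<Rightarrow> 'v cmat set" where
  "lin_span K A d = {M. \<exists>c. (\<forall>k\<le>d. c k \<in> K) \<and> M = msum (\<lambda>k. mscale (c k) (A k)) {0..d}}"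

definition assoc_scheme :: "(nat \<Rightarrow> ('v::finite) cmat) \<Rightarrow> nat \<Rightarrow> bool" where
  "assoc_scheme A d \<longleftrightarrow>
     (\<forall>i\<le>d. (\<forall>x y. A i x y = 0 \<or> A i x y = 1) \<and> A i \<noteq> mzero) \<and>
     A 0 = mid \<and>
     msum A {0..d} = mones \<and>
     (\<forall>i\<le>d. \<exists>j\<le>d. mtrans (A i) = A j) \<and>
     (\<forall>i\<le>d. \<forall>j\<le>d. mmult (A i) (A j) = mmult (A j) (A i)) \<and>
     (\<forall>i\<le>d. \<forall>j\<le>d. mmult (A i) (A j) \<in> lin_span UNIV A d)"

definition lin_indep :: "(nat \<Rightarrow> 'v cmat) \<Rightarrow> nat \<Rightarrow> bool" where
  "lin_indep A d \<longleftrightarrow>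
     (\<forall>c. msum (\<lambda>k. mscale (c k) (A k)) {0..d} = mzero \<longrightarrow> (\<forall>k\<le>d. c k = 0))"

definition principal_idempotents :: "(nat \<Rightarrow> ('v::finite) cmat) \<Rightarrow> nat \<Rightarrow> (nat \<Rightarrow> 'v cmat) \<Rightarrow> bool" where
  "principal_idempotents A d Es \<longleftrightarrow>
     (\<forall>j\<le>d. mmult (Es j) (Es j) = Es j \<and> mstar (Es j) = Es j) \<and>
     (\<forall>i\<le>d. \<forall>j\<le>d. i \<noteq> j \<longrightarrow> mmult (Es i) (Es j) = mzero) \<and>
     msum Es {0..d} = mid \<and>
     lin_indep Es d \<and>
     lin_span UNIV Es d = lin_span UNIV A d"

text \<open>The field K contains the splitting field L = Q(p_i(j)) of the scheme:
  with principal idempotents Es and A_i E_j = p_i(j) E_j, all p_i(j) lie in K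
  (K being a subfield of the complex numbers, it then contains all of L).\<close>
definition contains_splitting_field :: "complex set \<Rightarrow> (nat \<Rightarrow> ('v::finite) cmat) \<Rightarrow> nat \<Rightarrow> bool" where
  "contains_splitting_field K A d \<longleftrightarrow>
     (\<exists>Es p. principal_idempotents A d Es \<and>
        (\<forall>i\<le>d. \<forall>j\<le>d. mmult (A i) (Es j) = mscale (p i j) (Es j)) \<and>
        (\<forall>i\<le>d. \<forall>j\<le>d. p i j \<in> K))"

definition subfield_complex :: "complex set \<Rightarrow> bool" where
  "subfield_complex K \<longleftrightarrow> 0 \<in> K \<and> 1 \<in> K \<and>
     (\<forall>x\<in>K. \<forall>y\<in>K. x + y \<in> K \<and> x * y \<in> K) \<and>
     (\<forall>x\<in>K. - x \<in> K \<and> inverse x \<in> K)"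

definition BM_automorphism :: "complex set \<Rightarrow> (nat \<Rightarrow> ('v::finite) cmat) \<Rightarrow> nat \<Rightarrow> ('v cmat \<Rightarrow> 'v cmat) \<Rightarrow> bool" where
  "BM_automorphism K A d \<psi> \<longleftrightarrow>
     bij_betw \<psi> (lin_span K A d) (lin_span K A d) \<and>
     (\<forall>M\<in>lin_span K A d. \<forall>N\<in>lin_span K A d. \<forall>a\<in>K. \<forall>b\<in>K.
        \<psi> (madd (mscale a M) (mscale b N)) = madd (mscale a (\<psi> M)) (mscale b (\<psi> N))) \<and>
     (\<forall>M\<in>lin_span K A d. \<forall>N\<in>lin_span K A d. \<psi> (mmult M N) = mmult (\<psi> M) (\<psi> N)) \<and>
     (\<forall>M\<in>lin_span K A d. \<forall>N\<in>lin_span K A d. \<psi> (schur M N) = schur (\<psi> M) (\<psi> N)) \<and>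
     (\<forall>M\<in>lin_span K A d. \<psi> (mstar M) = mstar (\<psi> M))"

definition subscheme :: "(nat \<Rightarrow> ('v::finite) cmat) \<Rightarrow> nat \<Rightarrow> (nat \<Rightarrow> 'v cmat) \<Rightarrow> nat \<Rightarrow> bool" where
  "subscheme B e A d \<longleftrightarrow> assoc_scheme B e \<and>
     (\<exists>C :: nat \<Rightarrow> nat set.
        C 0 = {0} \<and>
        (\<forall>i\<le>e. C i \<noteq> {}) \<and>
        (\<forall>i\<le>e. \<forall>j\<le>e. i \<noteq> j \<longrightarrow> C i \<inter> C j = {}) \<and>
        (\<Union>i\<in>{0..e}. C i) = {0..d} \<and>
        (\<forall>i\<le>e. B i = msum A (C i)))"

end

theory Submission
  imports Defs
begin

text \<open>
  A Bose--Mesner automorphism \<open>\<psi>\<close> preserves Schur products, so it sends each Schur idempotent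
  \<open>A\<^sub>i\<close> to a Schur idempotent of \<open>E[\<A>]\<close>, i.e. to a 0/1 combination of the \<open>A\<^sub>j\<close>. These
  images are nonzero and pairwise Schur-orthogonal, so there are \<open>d + 1\<close> nonempty disjoint
  index sets in \<open>{0..d}\<close>: all are singletons and \<open>\<psi>\<close> permutes the basis by some \<open>\<sigma>\<close>.
  Hence \<open>\<Sum> c\<^sub>k A\<^sub>k\<close> is fixed iff \<open>c\<close> is constant on the \<open>\<sigma>\<close>-orbits, and the fixed space is
  spanned by the orbit sums. These form a fusion scheme: \<open>\<sigma>\<close> fixes \<open>0\<close> because \<open>\<psi>\<close> fixes the
  identity, \<open>\<sigma>\<close> commutes with transposition because \<open>\<psi>\<close> commutes with \<open>*\<close>, and the fixed
  space is closed under matrix multiplication.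
\<close>

section \<open>Partitions and orbits\<close>

lemma disjoint_nonempty_family_singleton:
  fixes F :: "'a \<Rightarrow> 'a set"
  assumes S: "finite S"
    and sub: "\<And>j. j \<in> S \<Longrightarrow> F j \<noteq> {} \<and> F j \<subseteq> S"
    and disj: "\<And>j l. j \<in> S \<Longrightarrow> l \<in> S \<Longrightarrow> j \<noteq> l \<Longrightarrow> F j \<inter> F l = {}"
    and "i \<in> S"
  shows "\<exists>k. F i = {k}"
proof -
  have fin: "finite (F j)" if "j \<in> S" for j
    using sub[OF that] S finite_subset by blast
  have pos: "1 \<le> card (F j)" if "j \<in> S" for j
    using sub[OF that] fin[OF that] by (simp add: Suc_le_eq card_gt_0_iff)
  have "(\<Sum>j\<in>S. card (F j)) = card (\<Union>j\<in>S. F j)"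
    using fin disj by (simp add: card_UN_disjoint S)
  also have "\<dots> \<le> card S"
    using sub by (intro card_mono S) auto
  finally have "(\<Sum>j\<in>S. card (F j)) \<le> (\<Sum>j\<in>S. 1)" by simp
  moreover have "(\<Sum>j\<in>S. 1) \<le> (\<Sum>j\<in>S. card (F j))"
    using pos by (rule sum_mono)
  ultimately have "card (F i) = 1"
    using sum_mono_inv[where f = "\<lambda>_. 1" and g = "\<lambda>j. card (F j)", OF _ pos \<open>i \<in> S\<close> S]
    by simp
  then show ?thesis by (simp add: card_1_singleton_iff)
qed

text \<open>For a permutation \<open>\<sigma>\<close> of \<open>S\<close> the classes are its orbits; describing them through
  \<open>\<sigma>\<close>-invariant predicates makes the equivalence properties immediate.\<close>
definition orbit_equiv :: "('a \<Rightarrow> 'a) \<Rightarrow> 'a set \<Rightarrow> 'a rel" where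
  "orbit_equiv \<sigma> S =
     {(k, l). k \<in> S \<and> l \<in> S \<and> (\<forall>P :: 'a \<Rightarrow> bool. (\<forall>j\<in>S. P (\<sigma> j) = P j) \<longrightarrow> P k = P l)}"

lemma equiv_orbit_equiv: "equiv S (orbit_equiv \<sigma> S)"
proof (rule equivI)
  show "orbit_equiv \<sigma> S \<subseteq> S \<times> S" "refl_on S (orbit_equiv \<sigma> S)"
    by (auto simp: orbit_equiv_def refl_on_def)
  show "sym (orbit_equiv \<sigma> S)"
    unfolding orbit_equiv_def sym_def by blast
  show "trans (orbit_equiv \<sigma> S)"
    unfolding orbit_equiv_def trans_def by blast
qed

lemma orbit_equivD:
  fixes P :: "'a \<Rightarrow> bool"
  assumes "(k, l) \<in> orbit_equiv \<sigma> S" and "\<forall>j\<in>S. P (\<sigma> j) = P j"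
  shows "P k = P l"
proof -
  have "\<forall>Q :: 'a \<Rightarrow> bool. (\<forall>j\<in>S. Q (\<sigma> j) = Q j) \<longrightarrow> Q k = Q l"
    using assms(1) unfolding orbit_equiv_def by simp
  then show ?thesis using assms(2) by simp
qed

lemma orbit_equiv_step: "k \<in> S \<Longrightarrow> \<sigma> k \<in> S \<Longrightarrow> (k, \<sigma> k) \<in> orbit_equiv \<sigma> S"
  unfolding orbit_equiv_def by simp

lemma orbit_equiv_invariant:
  assumes "\<forall>j\<in>S. c (\<sigma> j) = c j" and "(k, l) \<in> orbit_equiv \<sigma> S"
  shows "c k = c l"
  using orbit_equivD[OF assms(2), of "\<lambda>j. c j = c k"] assms(1) by simp

lemma orbit_equiv_fixed_point:
  assumes "inj_on \<sigma> S" "\<sigma> ` S \<subseteq> S" "a \<in> S" "\<sigma> a = a"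
  shows "orbit_equiv \<sigma> S `` {a} = {a}"
proof -
  have "\<forall>j\<in>S. (\<sigma> j = a) = (j = a)"
    using assms by (metis inj_onD)
  then have "l = a" if "(a, l) \<in> orbit_equiv \<sigma> S" for l
    using orbit_equivD[OF that, of "\<lambda>j. j = a"] by simp
  then show ?thesis
    using equiv_class_self[OF equiv_orbit_equiv \<open>a \<in> S\<close>] by blast
qed

lemma orbit_equiv_commute:
  assumes "f ` S \<subseteq> S" and "\<forall>j\<in>S. f (\<sigma> j) = \<sigma> (f j)"
    and "(k, l) \<in> orbit_equiv \<sigma> S"
  shows "(f k, f l) \<in> orbit_equiv \<sigma> S"
proof -
  have "k \<in> S" "l \<in> S" using assms(3) unfolding orbit_equiv_def by auto
  then have "f k \<in> S" "f l \<in> S" using assms(1) by auto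
  moreover have "P (f k) = P (f l)" if "\<forall>j\<in>S. P (\<sigma> j) = P j" for P :: "'a \<Rightarrow> bool"
    using orbit_equivD[OF assms(3), of "P \<circ> f"] assms(1,2) that by auto
  ultimately show ?thesis unfolding orbit_equiv_def by blast
qed

lemma orbit_invariant_iff_class_constant:
  assumes "\<sigma> ` S \<subseteq> S"
  shows "(\<forall>k\<in>S. c (\<sigma> k) = c k) \<longleftrightarrow> (\<forall>X\<in>S // orbit_equiv \<sigma> S. \<forall>k\<in>X. \<forall>l\<in>X. c k = c l)"
proof
  assume inv: "\<forall>k\<in>S. c (\<sigma> k) = c k"
  show "\<forall>X\<in>S // orbit_equiv \<sigma> S. \<forall>k\<in>X. \<forall>l\<in>X. c k = c l"
  proof (intro ballI)
    fix X k l assume "X \<in> S // orbit_equiv \<sigma> S" "k \<in> X" "l \<in> X"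
    then have "(k, l) \<in> orbit_equiv \<sigma> S"
      by (intro in_quotient_imp_in_rel[OF equiv_orbit_equiv]) auto
    then show "c k = c l" by (rule orbit_equiv_invariant[OF inv])
  qed
next
  assume const: "\<forall>X\<in>S // orbit_equiv \<sigma> S. \<forall>k\<in>X. \<forall>l\<in>X. c k = c l"
  show "\<forall>k\<in>S. c (\<sigma> k) = c k"
  proof
    fix k assume k: "k \<in> S"
    then have "\<sigma> k \<in> S" using assms by auto
    then have "\<sigma> k \<in> orbit_equiv \<sigma> S `` {k}"
      using orbit_equiv_step[OF k] by simp
    moreover have "orbit_equiv \<sigma> S `` {k} \<in> S // orbit_equiv \<sigma> S"
      using k by (rule quotientI)
    moreover have "k \<in> orbit_equiv \<sigma> S `` {k}"
      using equiv_class_self[OF equiv_orbit_equiv k] .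
    ultimately show "c (\<sigma> k) = c k" using const by blast
  qed
qed

lemma orbit_class_involution:
  assumes "f ` S \<subseteq> S" "\<forall>k\<in>S. f (f k) = k" "\<forall>k\<in>S. f (\<sigma> k) = \<sigma> (f k)"
    and X: "X \<in> S // orbit_equiv \<sigma> S"
  shows "\<exists>Y\<in>S // orbit_equiv \<sigma> S. \<forall>k\<in>S. f k \<in> X \<longleftrightarrow> k \<in> Y"
proof -
  let ?R = "orbit_equiv \<sigma> S"
  obtain r where r: "r \<in> S" "X = ?R `` {r}" using X by (auto elim: quotientE)
  have "f r \<in> S" using r(1) assms(1) by auto
  then have "?R `` {f r} \<in> S // ?R" by (rule quotientI)
  moreover have "f k \<in> ?R `` {r} \<longleftrightarrow> k \<in> ?R `` {f r}" if "k \<in> S" for k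
  proof
    assume "f k \<in> ?R `` {r}"
    then have "(f r, f (f k)) \<in> ?R" using orbit_equiv_commute[OF assms(1,3)] by blast
    then show "k \<in> ?R `` {f r}" using assms(2) that by simp
  next
    assume "k \<in> ?R `` {f r}"
    then have "(f (f r), f k) \<in> ?R" using orbit_equiv_commute[OF assms(1,3)] by blast
    then show "f k \<in> ?R `` {r}" using assms(2) r(1) by simp
  qed
  ultimately show ?thesis using r(2) by blast
qed

lemma quotient_enumeration:
  assumes "finite A" "equiv A R" "a \<in> A"
  shows "\<exists>C (e :: nat). C 0 = R `` {a} \<and> bij_betw C {0..e} (A // R)"
proof -
  have "finite (A // R)" using finite_quotient[OF assms(1) equiv_type[OF assms(2)]] .
  then obtain xs where xs: "set xs = A // R - {R `` {a}}" "distinct xs"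
    using finite_distinct_list[of "A // R - {R `` {a}}"] by auto
  have "R `` {a} \<in> A // R" using assms(3) by (rule quotientI)
  then have set: "set (R `` {a} # xs) = A // R" using xs(1) by auto
  have "bij_betw ((!) (R `` {a} # xs)) {..<length (R `` {a} # xs)} (set (R `` {a} # xs))"
    by (rule bij_betw_nth) (use xs in auto)
  moreover have "{..<length (R `` {a} # xs)} = {0..length xs}" by auto
  ultimately have "bij_betw ((!) (R `` {a} # xs)) {0..length xs} (A // R)"
    unfolding set by simp
  then have "\<exists>C. C 0 = R `` {a} \<and> bij_betw C {0..length xs} (A // R)"
    by (intro exI[of _ "(!) (R `` {a} # xs)"]) simp
  then show ?thesis by blast
qed

definition index_partition :: "(nat \<Rightarrow> 'a set) \<Rightarrow> nat \<Rightarrow> 'a set \<Rightarrow> bool" where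
  "index_partition C e S \<longleftrightarrow> (\<forall>i\<le>e. C i \<noteq> {}) \<and>
     (\<forall>i\<le>e. \<forall>j\<le>e. i \<noteq> j \<longrightarrow> C i \<inter> C j = {}) \<and> (\<Union>i\<in>{0..e}. C i) = S"

lemma index_partition_quotient:
  assumes R: "equiv A R" and C: "bij_betw C {0..e} (A // R)"
  shows "index_partition C e A"
  unfolding index_partition_def
proof (intro conjI allI impI)
  fix i assume "i \<le> e"
  then have "C i \<in> A // R" using bij_betwE[OF C] by simp
  then show "C i \<noteq> {}" using in_quotient_imp_non_empty[OF R] by blast
next
  fix i j assume "i \<le> e" "j \<le> e" "i \<noteq> j"
  then have "C i \<in> A // R" "C j \<in> A // R" "C i \<noteq> C j"
    using bij_betwE[OF C] bij_betw_imp_inj_on[OF C] by (auto dest: inj_onD)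
  then show "C i \<inter> C j = {}" using quotient_disj[OF R] by blast
next
  show "(\<Union>i\<in>{0..e}. C i) = A"
    using Union_quotient[OF R] bij_betw_imp_surj_on[OF C] by simp
qed

lemma lin_span_mono: "K \<subseteq> K' \<Longrightarrow> lin_span K X n \<subseteq> lin_span K' X n"
  unfolding lin_span_def by blast

section \<open>Association schemes and their fusions\<close>

locale association_scheme =
  fixes A :: "nat \<Rightarrow> ('v::finite) cmat" and d :: nat
  assumes scheme: "assoc_scheme A d"
begin

lemma A_01: "k \<le> d \<Longrightarrow> A k x y = 0 \<or> A k x y = 1"
  and A_nonzero: "k \<le> d \<Longrightarrow> A k \<noteq> mzero"
  and A_0: "A 0 = mid"
  and A_transpose: "k \<le> d \<Longrightarrow> \<exists>j\<le>d. mtrans (A k) = A j"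
  and A_commute: "k \<le> d \<Longrightarrow> l \<le> d \<Longrightarrow> mmult (A k) (A l) = mmult (A l) (A k)"
  and A_mult_span: "k \<le> d \<Longrightarrow> l \<le> d \<Longrightarrow> mmult (A k) (A l) \<in> lin_span UNIV A d"
  using scheme unfolding assoc_scheme_def by blast+

lemma A_sum: "(\<Sum>k\<in>{0..d}. A k x y) = 1"
proof -
  have "msum A {0..d} = mones" using scheme unfolding assoc_scheme_def by blast
  then show ?thesis unfolding msum_def mones_def by metis
qed

lemma ex1_relation: "\<exists>!k. k \<le> d \<and> A k x y = 1"
proof -
  let ?S = "{k\<in>{0..d}. A k x y = 1}"
  have "(\<Sum>k\<in>{0..d}. A k x y) = (\<Sum>k\<in>?S. 1)"
    using A_01[of _ x y] by (intro sum.mono_neutral_cong_right) fastforce+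
  then have "of_nat (card ?S) = (1 :: complex)" using A_sum by simp
  then have "card ?S = 1" by (metis of_nat_1 of_nat_eq_iff)
  then obtain k where "?S = {k}" by (rule card_1_singletonE)
  then show ?thesis by (intro ex1I[of _ k]) (auto simp: set_eq_iff)
qed

definition rel :: "'v \<Rightarrow> 'v \<Rightarrow> nat" where
  "rel x y = (THE k. k \<le> d \<and> A k x y = 1)"

lemma rel_le: "rel x y \<le> d"
  and A_rel: "A (rel x y) x y = 1"
  using theI'[OF ex1_relation[of x y]] unfolding rel_def by auto

lemma A_eq: "k \<le> d \<Longrightarrow> A k x y = of_bool (k = rel x y)"
  using A_01[of k x y] ex1_relation[of x y] rel_le A_rel by auto

lemma rel_surj: "k \<le> d \<Longrightarrow> \<exists>x y. rel x y = k"
proof -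
  assume k: "k \<le> d"
  have "\<exists>x y. A k x y \<noteq> 0"
    using A_nonzero[OF k] by (auto simp: mzero_def fun_eq_iff)
  then obtain x y where "A k x y \<noteq> 0" by blast
  then show ?thesis using A_eq[OF k] by auto
qed

text \<open>\<open>lin_comb c\<close> is \<open>\<Sum>\<^sub>k c\<^sub>k A\<^sub>k\<close>, since every pair of vertices lies in exactly one relation.\<close>
definition lin_comb :: "(nat \<Rightarrow> complex) \<Rightarrow> 'v cmat" where
  "lin_comb c = (\<lambda>x y. c (rel x y))"

lemma msum_scale_A:
  assumes "T \<subseteq> {0..d}"
  shows "msum (\<lambda>k. mscale (c k) (A k)) T = lin_comb (\<lambda>k. if k \<in> T then c k else 0)"
proof (intro ext)
  fix x y
  have "(\<Sum>k\<in>T. c k * A k x y) = (\<Sum>k\<in>T. if k = rel x y then c k else 0)"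
    using assms by (intro sum.cong) (auto simp: A_eq)
  moreover have "finite T" using assms finite_subset by blast
  ultimately show
    "msum (\<lambda>k. mscale (c k) (A k)) T x y = lin_comb (\<lambda>k. if k \<in> T then c k else 0) x y"
    unfolding msum_def mscale_def lin_comb_def by simp
qed

lemma lin_span_A: "M \<in> lin_span K A d \<longleftrightarrow> (\<exists>c. (\<forall>k\<le>d. c k \<in> K) \<and> M = lin_comb c)"
proof -
  have "msum (\<lambda>k. mscale (c k) (A k)) {0..d} = lin_comb c" for c
    using msum_scale_A[of "{0..d}" c] rel_le by (simp add: lin_comb_def)
  then show ?thesis unfolding lin_span_def by auto
qed

lemma lin_comb_eq_iff: "lin_comb a = lin_comb b \<longleftrightarrow> (\<forall>k\<le>d. a k = b k)"
proof
  assume ab: "lin_comb a = lin_comb b"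
  show "\<forall>k\<le>d. a k = b k"
  proof (intro allI impI)
    fix k assume "k \<le> d"
    then obtain x y where "rel x y = k" using rel_surj by blast
    then show "a k = b k" using fun_cong[OF fun_cong[OF ab, of x], of y] by (simp add: lin_comb_def)
  qed
qed (simp add: lin_comb_def rel_le fun_eq_iff)

lemma A_lin_comb: "k \<le> d \<Longrightarrow> A k = lin_comb (\<lambda>j. of_bool (j = k))"
  unfolding lin_comb_def by (intro ext) (simp add: A_eq eq_commute)

lemma msum_A: "T \<subseteq> {0..d} \<Longrightarrow> msum A T = lin_comb (\<lambda>k. of_bool (k \<in> T))"
  using msum_scale_A[of T "\<lambda>_. 1"] by (simp add: mscale_def of_bool_def)

lemma A_inj:
  assumes "i \<le> d" "j \<le> d" "A i = A j"
  shows "i = j"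
proof -
  have "lin_comb (\<lambda>k. of_bool (k = i)) = lin_comb (\<lambda>k. of_bool (k = j))"
    using assms A_lin_comb by simp
  then have "(of_bool (i = i) :: complex) = of_bool (i = j)"
    unfolding lin_comb_eq_iff using assms(1) by blast
  then show ?thesis by simp
qed

lemma schur_lin_comb: "schur (lin_comb a) (lin_comb b) = lin_comb (\<lambda>k. a k * b k)"
  unfolding lin_comb_def schur_def by simp

lemma mmult_lin_comb:
  "mmult (lin_comb a) (lin_comb b) x y =
     (\<Sum>k\<in>{0..d}. \<Sum>l\<in>{0..d}. a k * b l * mmult (A k) (A l) x y)"
proof -
  have "lin_comb c x z = (\<Sum>k\<in>{0..d}. c k * A k x z)" for c x z
    using fun_cong[OF fun_cong[OF msum_scale_A[of "{0..d}" c]]] rel_le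
    by (simp add: msum_def mscale_def lin_comb_def)
  then have "mmult (lin_comb a) (lin_comb b) x y =
      (\<Sum>z\<in>UNIV. \<Sum>k\<in>{0..d}. \<Sum>l\<in>{0..d}. a k * b l * (A k x z * A l z y))"
    unfolding mmult_def by (simp add: sum_product mult_ac)
  also have "\<dots> = (\<Sum>k\<in>{0..d}. \<Sum>l\<in>{0..d}. \<Sum>z\<in>UNIV. a k * b l * (A k x z * A l z y))"
    by (subst sum.swap) (simp add: sum.swap[of _ UNIV])
  also have "\<dots> = (\<Sum>k\<in>{0..d}. \<Sum>l\<in>{0..d}. a k * b l * mmult (A k) (A l) x y)"
    unfolding mmult_def by (simp add: sum_distrib_left)
  finally show ?thesis .
qed

lemma lin_comb_commute: "mmult (lin_comb a) (lin_comb b) = mmult (lin_comb b) (lin_comb a)"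
proof (intro ext)
  fix x y
  have "mmult (lin_comb a) (lin_comb b) x y =
      (\<Sum>k\<in>{0..d}. \<Sum>l\<in>{0..d}. b l * a k * mmult (A l) (A k) x y)"
    unfolding mmult_lin_comb by (intro sum.cong refl) (simp add: A_commute mult_ac)
  also have "\<dots> = mmult (lin_comb b) (lin_comb a) x y"
    unfolding mmult_lin_comb by (rule sum.swap)
  finally show "mmult (lin_comb a) (lin_comb b) x y = mmult (lin_comb b) (lin_comb a) x y" .
qed

lemma lin_span_A_iff_rel_constant:
  "M \<in> lin_span K A d \<longleftrightarrow>
     (\<forall>x y x' y'. rel x y = rel x' y' \<longrightarrow> M x y = M x' y') \<and> (\<forall>x y. M x y \<in> K)"
proof
  assume "M \<in> lin_span K A d"
  then obtain c where c: "\<forall>k\<le>d. c k \<in> K" "M = lin_comb c" unfolding lin_span_A by blast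
  show "(\<forall>x y x' y'. rel x y = rel x' y' \<longrightarrow> M x y = M x' y') \<and> (\<forall>x y. M x y \<in> K)"
  proof (intro conjI allI impI)
    fix x y x' y' assume "rel x y = rel x' y'"
    then show "M x y = M x' y'" unfolding c(2) lin_comb_def by simp
  next
    fix x y show "M x y \<in> K" unfolding c(2) lin_comb_def using c(1) rel_le by simp
  qed
next
  assume M: "(\<forall>x y x' y'. rel x y = rel x' y' \<longrightarrow> M x y = M x' y') \<and> (\<forall>x y. M x y \<in> K)"
  define pt where "pt k = (SOME p. rel (fst p) (snd p) = k)" for k
  define c where "c k = M (fst (pt k)) (snd (pt k))" for k
  have "M = lin_comb c"
  proof (intro ext)
    fix x y
    have "rel (fst (pt (rel x y))) (snd (pt (rel x y))) = rel x y"
      unfolding pt_def by (rule someI[where x = "(x, y)"]) simp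
    then have "M (fst (pt (rel x y))) (snd (pt (rel x y))) = M x y"
      using M[THEN conjunct1, rule_format] by blast
    then show "M x y = lin_comb c x y" unfolding c_def lin_comb_def by simp
  qed
  moreover have "\<forall>k\<le>d. c k \<in> K" using M[THEN conjunct2] unfolding c_def by simp
  ultimately show "M \<in> lin_span K A d" unfolding lin_span_A by blast
qed

lemma mmult_lin_span:
  assumes K: "0 \<in> K" "\<forall>a\<in>K. \<forall>b\<in>K. a + b \<in> K \<and> a * b \<in> K"
    and M: "M \<in> lin_span K A d" and N: "N \<in> lin_span K A d"
  shows "mmult M N \<in> lin_span K A d"
proof -
  obtain a b where a: "\<forall>k\<le>d. a k \<in> K" "M = lin_comb a" and b: "\<forall>k\<le>d. b k \<in> K" "N = lin_comb b"
    using M N unfolding lin_span_A by blast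
  have A_mult_rel: "mmult (A k) (A l) x y = mmult (A k) (A l) x' y'"
    if "k \<le> d" "l \<le> d" "rel x y = rel x' y'" for k l x y x' y'
    using A_mult_span[OF that(1,2)] that(3) unfolding lin_span_A_iff_rel_constant by blast
  have "(\<Sum>z\<in>Z. a (rel x z) * b (rel z y)) \<in> K" if "finite Z" for x y and Z :: "'v set"
    using that by induction (use K a b rel_le in auto)
  then have "mmult M N x y \<in> K" for x y
    unfolding a b mmult_def lin_comb_def by simp
  moreover have "mmult M N x y = mmult M N x' y'" if "rel x y = rel x' y'" for x y x' y'
    unfolding a b mmult_lin_comb using A_mult_rel[OF _ _ that] by (intro sum.cong refl) simp
  ultimately show ?thesis unfolding lin_span_A_iff_rel_constant by blast
qed

definition transp_rel :: "nat \<Rightarrow> nat" where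
  "transp_rel k = (SOME j. j \<le> d \<and> mtrans (A k) = A j)"

lemma transp_rel: "k \<le> d \<Longrightarrow> transp_rel k \<le> d \<and> mtrans (A k) = A (transp_rel k)"
  unfolding transp_rel_def by (rule someI_ex) (rule A_transpose)

lemma transp_rel_le: "k \<le> d \<Longrightarrow> transp_rel k \<le> d"
  using transp_rel by blast

lemma rel_swap: "transp_rel (rel x y) = rel y x"
proof -
  have "A (transp_rel (rel x y)) y x = 1"
    using transp_rel[OF rel_le] A_rel[of x y] by (metis mtrans_def)
  then show ?thesis using A_eq[OF transp_rel_le[OF rel_le]] by simp
qed

lemma transp_rel_transp_rel: "k \<le> d \<Longrightarrow> transp_rel (transp_rel k) = k"
  using rel_surj rel_swap by metis

lemma mstar_A: "k \<le> d \<Longrightarrow> mstar (A k) = A (transp_rel k)"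
proof -
  assume k: "k \<le> d"
  have "mstar (A k) = mtrans (A k)"
    using A_01[OF k] unfolding mstar_def mtrans_def
    by (intro ext) (metis complex_cnj_one complex_cnj_zero)
  then show ?thesis using transp_rel[OF k] by simp
qed

end

locale fusion = association_scheme A d for A :: "nat \<Rightarrow> ('v::finite) cmat" and d +
  fixes C :: "nat \<Rightarrow> nat set" and e :: nat
  assumes partition: "index_partition C e {0..d}"
begin

lemma C_nonempty: "i \<le> e \<Longrightarrow> C i \<noteq> {}"
  and C_disjoint: "i \<le> e \<Longrightarrow> j \<le> e \<Longrightarrow> i \<noteq> j \<Longrightarrow> C i \<inter> C j = {}"
  and C_cover: "(\<Union>i\<in>{0..e}. C i) = {0..d}"
  using partition unfolding index_partition_def by blast+

lemma C_subset: "i \<le> e \<Longrightarrow> C i \<subseteq> {0..d}"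
  using C_cover by auto

definition block :: "nat \<Rightarrow> nat" where
  "block k = (THE i. i \<le> e \<and> k \<in> C i)"

lemma block_unique: "i \<le> e \<Longrightarrow> k \<in> C i \<Longrightarrow> block k = i"
  unfolding block_def using C_disjoint by (intro the_equality) blast+

lemma block: "k \<le> d \<Longrightarrow> block k \<le> e \<and> k \<in> C (block k)"
proof -
  assume "k \<le> d"
  then have "k \<in> (\<Union>i\<in>{0..e}. C i)" using C_cover by simp
  then obtain i where "i \<le> e" "k \<in> C i" by auto
  then show ?thesis using block_unique by simp
qed

definition fused :: "nat \<Rightarrow> 'v cmat" where
  "fused i = msum A (C i)"

lemma fused_lin_comb: "i \<le> e \<Longrightarrow> fused i = lin_comb (\<lambda>k. of_bool (k \<in> C i))"
  unfolding fused_def using C_subset by (rule msum_A)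

lemma in_C_iff_block: "k \<le> d \<Longrightarrow> i \<le> e \<Longrightarrow> k \<in> C i \<longleftrightarrow> i = block k"
  using block block_unique by blast

lemma msum_scale_fused: "msum (\<lambda>i. mscale (b i) (fused i)) {0..e} = lin_comb (\<lambda>k. b (block k))"
proof (intro ext)
  fix x y
  have "b i * fused i x y = (if i = block (rel x y) then b i else 0)" if "i \<in> {0..e}" for i
    using that in_C_iff_block[OF rel_le] by (simp add: fused_lin_comb lin_comb_def)
  then have "(\<Sum>i\<in>{0..e}. b i * fused i x y) = (\<Sum>i\<in>{0..e}. if i = block (rel x y) then b i else 0)"
    by (rule sum.cong[OF refl])
  then show "msum (\<lambda>i. mscale (b i) (fused i)) {0..e} x y = lin_comb (\<lambda>k. b (block k)) x y"
    using block[OF rel_le] by (simp add: msum_def mscale_def lin_comb_def)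
qed

lemma lin_span_fused:
  "M \<in> lin_span K fused e \<longleftrightarrow>
     (\<exists>c. (\<forall>k\<le>d. c k \<in> K) \<and> (\<forall>i\<le>e. \<forall>k\<in>C i. \<forall>l\<in>C i. c k = c l) \<and> M = lin_comb c)"
proof
  assume "M \<in> lin_span K fused e"
  then obtain b where b: "\<forall>i\<le>e. b i \<in> K" "M = lin_comb (\<lambda>k. b (block k))"
    unfolding lin_span_def msum_scale_fused by blast
  have "\<forall>k\<le>d. b (block k) \<in> K" using b(1) block by blast
  moreover have "b (block k) = b (block l)" if "i \<le> e" "k \<in> C i" "l \<in> C i" for i k l
    using block_unique[OF that(1,2)] block_unique[OF that(1,3)] by simp
  ultimately show "\<exists>c. (\<forall>k\<le>d. c k \<in> K) \<and> (\<forall>i\<le>e. \<forall>k\<in>C i. \<forall>l\<in>C i. c k = c l) \<and> M = lin_comb c"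
    using b(2) by (intro exI[of _ "\<lambda>k. b (block k)"]) blast
next
  assume "\<exists>c. (\<forall>k\<le>d. c k \<in> K) \<and> (\<forall>i\<le>e. \<forall>k\<in>C i. \<forall>l\<in>C i. c k = c l) \<and> M = lin_comb c"
  then obtain c where c: "\<forall>k\<le>d. c k \<in> K" "\<forall>i\<le>e. \<forall>k\<in>C i. \<forall>l\<in>C i. c k = c l" "M = lin_comb c"
    by blast
  define b where "b i = c (SOME k. k \<in> C i)" for i
  have pick: "(SOME k. k \<in> C i) \<in> C i" if "i \<le> e" for i
    using C_nonempty[OF that] by (simp add: some_in_eq)
  have "b (block k) = c k" if "k \<le> d" for k
    using c(2) block[OF that] pick unfolding b_def by blast
  then have "M = msum (\<lambda>i. mscale (b i) (fused i)) {0..e}"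
    unfolding msum_scale_fused c(3) lin_comb_eq_iff by auto
  moreover have "b i \<in> K" if "i \<le> e" for i
    using pick[OF that] C_subset[OF that] c(1) unfolding b_def by auto
  ultimately show "M \<in> lin_span K fused e" unfolding lin_span_def by blast
qed

lemma fused_in_lin_span:
  assumes "0 \<in> K" "1 \<in> K" "i \<le> e"
  shows "fused i \<in> lin_span K fused e"
proof -
  have const: "of_bool (k \<in> C i) = (of_bool (l \<in> C i) :: complex)"
    if "j \<le> e" "k \<in> C j" "l \<in> C j" for j k l
  proof -
    have "k \<le> d" "l \<le> d" using that C_subset[OF that(1)] by auto
    moreover have "block k = j" "block l = j" using block_unique[OF that(1)] that(2,3) by auto
    ultimately show ?thesis using in_C_iff_block[OF _ assms(3)] by simp
  qed
  moreover have "\<forall>k\<le>d. of_bool (k \<in> C i) \<in> K" using assms(1,2) by simp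
  ultimately show ?thesis
    unfolding lin_span_fused using fused_lin_comb[OF assms(3)]
    by (intro exI[of _ "\<lambda>k. of_bool (k \<in> C i)"]) blast
qed

lemma subscheme_fused:
  assumes C_0: "C 0 = {0}"
    and transp: "\<forall>i\<le>e. \<exists>j\<le>e. \<forall>k\<le>d. transp_rel k \<in> C i \<longleftrightarrow> k \<in> C j"
    and mult: "\<forall>i\<le>e. \<forall>j\<le>e. mmult (fused i) (fused j) \<in> lin_span UNIV fused e"
  shows "subscheme fused e A d"
proof -
  have "assoc_scheme fused e"
    unfolding assoc_scheme_def
  proof (intro conjI allI impI)
    fix i x y assume "i \<le> e"
    then show "fused i x y = 0 \<or> fused i x y = 1" by (simp add: fused_lin_comb lin_comb_def)
  next
    fix i assume i: "i \<le> e"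
    then obtain k where k: "k \<in> C i" using C_nonempty by blast
    moreover have "k \<le> d" using k C_subset[OF i] by auto
    ultimately obtain x y where "rel x y = k" using rel_surj by blast
    then have "fused i x y = 1" using i k by (simp add: fused_lin_comb lin_comb_def)
    then show "fused i \<noteq> mzero" by (auto simp: mzero_def)
  next
    show "fused 0 = mid" unfolding fused_def C_0 msum_def using A_0 by simp
  next
    show "msum fused {0..e} = mones"
      using msum_scale_fused[of "\<lambda>_. 1"] by (simp add: mscale_def mones_def lin_comb_def)
  next
    fix i assume i: "i \<le> e"
    then obtain j where j: "j \<le> e" "\<forall>k\<le>d. transp_rel k \<in> C i \<longleftrightarrow> k \<in> C j"
      using transp by blast
    have "mtrans (fused i) x y = fused j x y" for x y
    proof -
      have "mtrans (fused i) x y = of_bool (transp_rel (rel x y) \<in> C i)"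
        using i by (simp add: fused_lin_comb lin_comb_def mtrans_def rel_swap)
      also have "\<dots> = fused j x y"
        using j rel_le[of x y] by (simp add: fused_lin_comb lin_comb_def)
      finally show ?thesis .
    qed
    then have "mtrans (fused i) = fused j" by (intro ext)
    then show "\<exists>j\<le>e. mtrans (fused i) = fused j" using j(1) by blast
  next
    fix i j assume "i \<le> e" "j \<le> e"
    then show "mmult (fused i) (fused j) = mmult (fused j) (fused i)"
      by (simp add: fused_lin_comb lin_comb_commute)
  next
    fix i j assume "i \<le> e" "j \<le> e"
    then show "mmult (fused i) (fused j) \<in> lin_span UNIV fused e" using mult by blast
  qed
  then show ?thesis
    unfolding subscheme_def
    using C_0 C_nonempty C_disjoint C_cover by (intro conjI exI[of _ C]) (auto simp: fused_def)
qed

end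

section \<open>Automorphisms of the Bose--Mesner algebra\<close>

lemma mmult_mid_left: "mmult mid M = (M :: ('v::finite) cmat)"
proof (intro ext)
  fix i j
  have "(\<Sum>k\<in>UNIV. mid i k * M k j) = (\<Sum>k\<in>UNIV. if k = i then M k j else 0)"
    by (rule sum.cong) (auto simp: mid_def)
  then show "mmult mid M i j = M i j" unfolding mmult_def by simp
qed

lemma mmult_mid_right: "mmult M mid = (M :: ('v::finite) cmat)"
proof (intro ext)
  fix i j
  have "(\<Sum>k\<in>UNIV. M i k * mid k j) = (\<Sum>k\<in>UNIV. if k = j then M i k else 0)"
    by (rule sum.cong) (auto simp: mid_def)
  then show "mmult M mid i j = M i j" unfolding mmult_def by simp
qed

locale scheme_automorphism = association_scheme A d for A :: "nat \<Rightarrow> ('v::finite) cmat" and d +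
  fixes E :: "complex set" and \<psi> :: "'v cmat \<Rightarrow> 'v cmat"
  assumes field: "subfield_complex E"
    and automorphism: "BM_automorphism E A d \<psi>"
begin

lemma E_0: "0 \<in> E" and E_1: "1 \<in> E"
  and E_add_mult: "\<forall>a\<in>E. \<forall>b\<in>E. a + b \<in> E \<and> a * b \<in> E"
  using field unfolding subfield_complex_def by auto

lemma psi_bij: "bij_betw \<psi> (lin_span E A d) (lin_span E A d)"
  and psi_linear: "M \<in> lin_span E A d \<Longrightarrow> N \<in> lin_span E A d \<Longrightarrow> a \<in> E \<Longrightarrow> b \<in> E \<Longrightarrow>
     \<psi> (madd (mscale a M) (mscale b N)) = madd (mscale a (\<psi> M)) (mscale b (\<psi> N))"
  and psi_mmult: "M \<in> lin_span E A d \<Longrightarrow> N \<in> lin_span E A d \<Longrightarrow> \<psi> (mmult M N) = mmult (\<psi> M) (\<psi> N)"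
  and psi_schur: "M \<in> lin_span E A d \<Longrightarrow> N \<in> lin_span E A d \<Longrightarrow> \<psi> (schur M N) = schur (\<psi> M) (\<psi> N)"
  and psi_mstar: "M \<in> lin_span E A d \<Longrightarrow> \<psi> (mstar M) = mstar (\<psi> M)"
  using automorphism unfolding BM_automorphism_def by blast+

lemma psi_inj: "M \<in> lin_span E A d \<Longrightarrow> N \<in> lin_span E A d \<Longrightarrow> \<psi> M = \<psi> N \<Longrightarrow> M = N"
  using bij_betw_imp_inj_on[OF psi_bij] by (rule inj_onD)

lemma lin_comb_in_span: "\<forall>k\<le>d. c k \<in> E \<Longrightarrow> lin_comb c \<in> lin_span E A d"
  unfolding lin_span_A by blast

lemma A_in_span: "k \<le> d \<Longrightarrow> A k \<in> lin_span E A d"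
  unfolding A_lin_comb using E_0 E_1 by (intro lin_comb_in_span) simp

lemma psi_zero: "\<psi> (lin_comb (\<lambda>_. 0)) = lin_comb (\<lambda>_. 0)"
proof -
  let ?Z = "lin_comb (\<lambda>_. 0)"
  have Z: "?Z \<in> lin_span E A d" using lin_comb_in_span E_0 by simp
  have zero: "madd (mscale 0 M) (mscale 0 N) = ?Z" for M N :: "'v cmat"
    unfolding madd_def mscale_def lin_comb_def by simp
  show ?thesis using psi_linear[OF Z Z E_0 E_0] unfolding zero .
qed

lemma psi_lin_comb_partial:
  assumes "\<forall>k\<le>d. c k \<in> E" "T \<subseteq> {0..d}"
  shows "\<psi> (lin_comb (\<lambda>k. if k \<in> T then c k else 0)) = (\<lambda>x y. \<Sum>k\<in>T. c k * \<psi> (A k) x y)"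
proof -
  have "finite T" using assms(2) finite_subset by blast
  then show ?thesis using assms(2)
  proof (induction T rule: finite_induct)
    case empty
    then show ?case using psi_zero by (simp add: lin_comb_def)
  next
    case (insert a T)
    let ?M = "lin_comb (\<lambda>k. if k \<in> T then c k else 0)"
    let ?N = "lin_comb (\<lambda>k. if k \<in> insert a T then c k else 0)"
    have a: "a \<le> d" "c a \<in> E" using insert.prems assms(1) by auto
    have M: "?M \<in> lin_span E A d" using assms(1) E_0 by (intro lin_comb_in_span) simp
    have "?N = madd (mscale 1 ?M) (mscale (c a) (A a))"
      using insert.hyps(2) a(1) by (intro ext) (auto simp: lin_comb_def madd_def mscale_def A_eq)
    then have "\<psi> ?N = madd (mscale 1 (\<psi> ?M)) (mscale (c a) (\<psi> (A a)))"
      using psi_linear[OF M A_in_span[OF a(1)] E_1 a(2)] by simp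
    then show ?case
      using insert by (simp add: madd_def mscale_def fun_eq_iff add.commute)
  qed
qed

lemma psi_lin_comb:
  assumes "\<forall>k\<le>d. c k \<in> E"
  shows "\<psi> (lin_comb c) = (\<lambda>x y. \<Sum>k\<in>{0..d}. c k * \<psi> (A k) x y)"
proof -
  have "lin_comb (\<lambda>k. if k \<in> {0..d} then c k else 0) = lin_comb c"
    unfolding lin_comb_eq_iff by simp
  then show ?thesis using psi_lin_comb_partial[OF assms order_refl] by simp
qed

lemma psi_A_indicator: "i \<le> d \<Longrightarrow> \<exists>S\<subseteq>{0..d}. \<psi> (A i) = lin_comb (\<lambda>k. of_bool (k \<in> S))"
proof -
  assume i: "i \<le> d"
  have "\<psi> (A i) \<in> lin_span E A d" using bij_betwE[OF psi_bij] A_in_span[OF i] by blast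
  then obtain s where s: "\<forall>k\<le>d. s k \<in> E" "\<psi> (A i) = lin_comb s"
    unfolding lin_span_A by blast
  have "schur (A i) (A i) = A i"
    unfolding schur_def by (intro ext) (simp add: A_eq[OF i])
  then have "lin_comb (\<lambda>k. s k * s k) = lin_comb s"
    using psi_schur[OF A_in_span[OF i] A_in_span[OF i]] s(2) by (simp add: schur_lin_comb)
  then have "s k = 0 \<or> s k = 1" if "k \<le> d" for k
    unfolding lin_comb_eq_iff using that by (metis mult_cancel_left1 mult_eq_0_iff)
  then have "lin_comb s = lin_comb (\<lambda>k. of_bool (k \<in> {k. k \<le> d \<and> s k = 1}))"
    unfolding lin_comb_eq_iff by fastforce
  then show ?thesis using s(2) by (intro exI[of _ "{k. k \<le> d \<and> s k = 1}"]) auto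
qed

lemma schur_A_A: "i \<le> d \<Longrightarrow> j \<le> d \<Longrightarrow> i \<noteq> j \<Longrightarrow> schur (A i) (A j) = lin_comb (\<lambda>_. 0)"
  unfolding schur_def lin_comb_def by (intro ext) (auto simp: A_eq)

lemma psi_A_eq_A: "i \<le> d \<Longrightarrow> \<exists>j\<le>d. \<psi> (A i) = A j"
proof -
  assume i: "i \<le> d"
  obtain S where S: "\<And>i. i \<le> d \<Longrightarrow> S i \<subseteq> {0..d} \<and> \<psi> (A i) = lin_comb (\<lambda>k. of_bool (k \<in> S i))"
    using psi_A_indicator by metis
  have "S i \<noteq> {}" if "i \<le> d" for i
  proof
    assume "S i = {}"
    then have "\<psi> (A i) = \<psi> (lin_comb (\<lambda>_. 0))" using S[OF that] psi_zero by simp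
    then have "A i = lin_comb (\<lambda>_. 0)"
      using psi_inj A_in_span[OF that] lin_comb_in_span[of "\<lambda>_. 0"] E_0 by simp
    then have "lin_comb (\<lambda>j. of_bool (j = i)) = lin_comb (\<lambda>_. 0)" using A_lin_comb[OF that] by simp
    then show False using that unfolding lin_comb_eq_iff by auto
  qed
  moreover have "S i \<inter> S j = {}" if "i \<le> d" "j \<le> d" "i \<noteq> j" for i j
  proof -
    have "lin_comb (\<lambda>_. 0) = schur (\<psi> (A i)) (\<psi> (A j))"
      using psi_schur[OF A_in_span[OF that(1)] A_in_span[OF that(2)]] schur_A_A[OF that] psi_zero
      by simp
    then have "\<forall>k\<le>d. 0 = of_bool (k \<in> S i) * (of_bool (k \<in> S j) :: complex)"
      using S that by (simp add: schur_lin_comb lin_comb_eq_iff)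
    then show ?thesis using S[OF that(1)] by auto
  qed
  ultimately obtain j where "S i = {j}"
    using disjoint_nonempty_family_singleton[of "{0..d}" S i] S i by auto
  then show ?thesis using S[OF i] A_lin_comb by auto
qed

definition basis_perm :: "nat \<Rightarrow> nat" where
  "basis_perm i = (THE j. j \<le> d \<and> \<psi> (A i) = A j)"

lemma basis_perm: "i \<le> d \<Longrightarrow> basis_perm i \<le> d \<and> \<psi> (A i) = A (basis_perm i)"
proof -
  assume "i \<le> d"
  then obtain j where j: "j \<le> d" "\<psi> (A i) = A j" using psi_A_eq_A by blast
  then have "\<exists>!j. j \<le> d \<and> \<psi> (A i) = A j" using A_inj by (intro ex1I[of _ j]) auto
  then show ?thesis unfolding basis_perm_def by (rule theI')
qed

lemma bij_basis_perm: "bij_betw basis_perm {0..d} {0..d}"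
proof -
  have inj: "inj_on basis_perm {0..d}"
  proof (rule inj_onI)
    fix i j assume ij: "i \<in> {0..d}" "j \<in> {0..d}" and eq: "basis_perm i = basis_perm j"
    have "\<psi> (A i) = \<psi> (A j)"
      using basis_perm[of i] basis_perm[of j] ij eq by simp
    then have "A i = A j"
      using psi_inj[OF A_in_span A_in_span] ij by simp
    then show "i = j" using A_inj ij by simp
  qed
  have "basis_perm ` {0..d} \<subseteq> {0..d}"
    by (rule image_subsetI) (simp add: basis_perm)
  then show ?thesis
    unfolding bij_betw_def using inj endo_inj_surj[OF finite_atLeastAtMost _ inj] by simp
qed

lemma basis_perm_0: "basis_perm 0 = 0"
proof -
  have "A 0 \<in> \<psi> ` lin_span E A d"
    using bij_betw_imp_surj_on[OF psi_bij] A_in_span[of 0] by simp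
  then obtain M where M: "M \<in> lin_span E A d" "\<psi> M = mid" using A_0 by auto
  have "\<psi> (A 0) = mmult (\<psi> (A 0)) (\<psi> M)" unfolding M(2) mmult_mid_right ..
  also have "\<dots> = \<psi> (mmult (A 0) M)" using psi_mmult[OF A_in_span[of 0] M(1)] by simp
  also have "\<dots> = A 0" unfolding A_0 mmult_mid_left M(2) ..
  finally have "A (basis_perm 0) = A 0" using basis_perm[of 0] by simp
  then show ?thesis using A_inj[of "basis_perm 0" 0] basis_perm[of 0] by simp
qed

lemma basis_perm_transp: "k \<le> d \<Longrightarrow> basis_perm (transp_rel k) = transp_rel (basis_perm k)"
proof -
  assume k: "k \<le> d"
  have t: "transp_rel k \<le> d" "transp_rel (basis_perm k) \<le> d"
    using transp_rel_le k basis_perm by auto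
  have "A (basis_perm (transp_rel k)) = \<psi> (mstar (A k))"
    using basis_perm[OF t(1)] mstar_A[OF k] by simp
  also have "\<dots> = mstar (\<psi> (A k))" using psi_mstar[OF A_in_span[OF k]] .
  also have "\<dots> = A (transp_rel (basis_perm k))" using basis_perm[OF k] mstar_A by simp
  finally show ?thesis using A_inj basis_perm[OF t(1)] t(2) by blast
qed

lemma psi_lin_comb_perm:
  assumes "\<forall>k\<le>d. c k \<in> E"
  shows "\<psi> (lin_comb c) = lin_comb (\<lambda>j. c (inv_into {0..d} basis_perm j))"
proof (intro ext)
  fix x y
  let ?k = "inv_into {0..d} basis_perm (rel x y)"
  have k: "?k \<in> {0..d}" "basis_perm ?k = rel x y"
    using bij_betwE[OF bij_betw_inv_into[OF bij_basis_perm]]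
      bij_betw_inv_into_right[OF bij_basis_perm]
      rel_le by auto
  have "\<psi> (lin_comb c) x y = (\<Sum>k\<in>{0..d}. c k * A (basis_perm k) x y)"
    using psi_lin_comb[OF assms] basis_perm by simp
  also have "\<dots> = (\<Sum>k\<in>{0..d}. if k = ?k then c k else 0)"
  proof (rule sum.cong[OF refl])
    fix k assume "k \<in> {0..d}"
    have "basis_perm k = rel x y \<longleftrightarrow> k = ?k"
    proof
      assume "basis_perm k = rel x y"
      then show "k = ?k" using bij_betw_inv_into_left[OF bij_basis_perm \<open>k \<in> {0..d}\<close>] by simp
    qed (use k(2) in simp)
    then show "c k * A (basis_perm k) x y = (if k = ?k then c k else 0)"
      using A_eq basis_perm \<open>k \<in> {0..d}\<close> by simp
  qed
  also have "\<dots> = lin_comb (\<lambda>j. c (inv_into {0..d} basis_perm j)) x y"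
    using k(1) by (simp add: lin_comb_def)
  finally show "\<psi> (lin_comb c) x y = lin_comb (\<lambda>j. c (inv_into {0..d} basis_perm j)) x y" .
qed

lemma psi_fixed_iff:
  assumes "\<forall>k\<le>d. c k \<in> E"
  shows "\<psi> (lin_comb c) = lin_comb c \<longleftrightarrow> (\<forall>k\<in>{0..d}. c (basis_perm k) = c k)"
proof -
  have "\<psi> (lin_comb c) = lin_comb c \<longleftrightarrow> (\<forall>j\<in>{0..d}. c (inv_into {0..d} basis_perm j) = c j)"
    unfolding psi_lin_comb_perm[OF assms] lin_comb_eq_iff by auto
  also have "\<dots> \<longleftrightarrow> (\<forall>k\<in>{0..d}. c (basis_perm k) = c k)"
  proof (intro iffI ballI)
    fix k assume inv: "\<forall>j\<in>{0..d}. c (inv_into {0..d} basis_perm j) = c j" and k: "k \<in> {0..d}"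
    then show "c (basis_perm k) = c k"
      using inv[rule_format, OF bij_betw_apply[OF bij_basis_perm k]]
        bij_betw_inv_into_left[OF bij_basis_perm k] by simp
  next
    fix j assume inv: "\<forall>k\<in>{0..d}. c (basis_perm k) = c k" and j: "j \<in> {0..d}"
    then show "c (inv_into {0..d} basis_perm j) = c j"
      using inv[rule_format, OF bij_betw_apply[OF bij_betw_inv_into[OF bij_basis_perm] j]]
        bij_betw_inv_into_right[OF bij_basis_perm j] by simp
  qed
  finally show ?thesis .
qed

lemma basis_perm_into: "basis_perm ` {0..d} \<subseteq> {0..d}"
  using bij_betw_imp_surj_on[OF bij_basis_perm] by simp

end

locale orbit_fusion = scheme_automorphism A d E \<psi>
  for A :: "nat \<Rightarrow> ('v::finite) cmat" and d E \<psi> +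
  fixes C :: "nat \<Rightarrow> nat set" and e :: nat
  assumes C_0: "C 0 = {0}"
    and orbit_classes: "bij_betw C {0..e} ({0..d} // orbit_equiv basis_perm {0..d})"
begin

sublocale fusion A d C e
  using index_partition_quotient[OF equiv_orbit_equiv orbit_classes] by unfold_locales

lemma orbits_eq: "{0..d} // orbit_equiv basis_perm {0..d} = C ` {0..e}"
  using bij_betw_imp_surj_on[OF orbit_classes] by simp

lemma invariant_iff_block_constant:
  "(\<forall>k\<in>{0..d}. c (basis_perm k) = c k) \<longleftrightarrow> (\<forall>i\<le>e. \<forall>k\<in>C i. \<forall>l\<in>C i. c k = c l)"
  unfolding orbit_invariant_iff_class_constant[OF basis_perm_into] orbits_eq
  by (simp add: Ball_def[of "{0..e}"])

lemma fixed_space_eq: "{M \<in> lin_span E A d. \<psi> M = M} = lin_span E fused e"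
proof (intro set_eqI)
  fix M
  show "M \<in> {M \<in> lin_span E A d. \<psi> M = M} \<longleftrightarrow> M \<in> lin_span E fused e"
    unfolding lin_span_fused mem_Collect_eq lin_span_A
    using psi_fixed_iff invariant_iff_block_constant by blast
qed

lemma fused_transp_closed: "\<forall>i\<le>e. \<exists>j\<le>e. \<forall>k\<le>d. transp_rel k \<in> C i \<longleftrightarrow> k \<in> C j"
proof (intro allI impI)
  fix i assume "i \<le> e"
  have "transp_rel ` {0..d} \<subseteq> {0..d}" by (rule image_subsetI) (simp add: transp_rel_le)
  moreover have "\<forall>k\<in>{0..d}. transp_rel (transp_rel k) = k" by (simp add: transp_rel_transp_rel)
  moreover have "\<forall>k\<in>{0..d}. transp_rel (basis_perm k) = basis_perm (transp_rel k)"
    using basis_perm_transp by simp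
  moreover have "C i \<in> {0..d} // orbit_equiv basis_perm {0..d}" using orbits_eq \<open>i \<le> e\<close> by simp
  ultimately have "\<exists>Y\<in>{0..d} // orbit_equiv basis_perm {0..d}. \<forall>k\<in>{0..d}. transp_rel k \<in> C i \<longleftrightarrow> k \<in> Y"
    by (rule orbit_class_involution)
  then obtain Y where Y: "Y \<in> C ` {0..e}" "\<forall>k\<in>{0..d}. transp_rel k \<in> C i \<longleftrightarrow> k \<in> Y"
    unfolding orbits_eq by blast
  obtain j where "Y = C j" "j \<in> {0..e}" using Y(1) by (rule imageE)
  then show "\<exists>j\<le>e. \<forall>k\<le>d. transp_rel k \<in> C i \<longleftrightarrow> k \<in> C j"
    using Y(2) by (intro exI[of _ j]) simp
qed

lemma fused_mult_closed: "\<forall>i\<le>e. \<forall>j\<le>e. mmult (fused i) (fused j) \<in> lin_span UNIV fused e"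
proof (intro allI impI)
  fix i j assume "i \<le> e" "j \<le> e"
  then have "fused i \<in> {M \<in> lin_span E A d. \<psi> M = M}" "fused j \<in> {M \<in> lin_span E A d. \<psi> M = M}"
    using fused_in_lin_span[OF E_0 E_1] fixed_space_eq by auto
  then have "mmult (fused i) (fused j) \<in> {M \<in> lin_span E A d. \<psi> M = M}"
    using mmult_lin_span[OF E_0 E_add_mult] psi_mmult by simp
  then show "mmult (fused i) (fused j) \<in> lin_span UNIV fused e"
    using fixed_space_eq lin_span_mono[of E UNIV] by auto
qed

lemma subscheme_orbit_fusion: "subscheme fused e A d"
  using subscheme_fused[OF C_0 fused_transp_closed fused_mult_closed] .

end

theorem lemma3p4:
  fixes A :: "nat \<Rightarrow> ('v::finite) cmat" and d :: nat
    and E :: "complex set" and \<psi> :: "'v cmat \<Rightarrow> 'v cmat"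
  assumes "assoc_scheme A d"
    and "subfield_complex E"
    and "\<forall>x\<in>E. cnj x \<in> E"
    and "contains_splitting_field E A d"
    and "BM_automorphism E A d \<psi>"
  shows "\<exists>B e. subscheme B e A d \<and>
           {M \<in> lin_span E A d. \<psi> M = M} = lin_span E B e"
proof -
  interpret scheme_automorphism A d E \<psi>
    using assms(1,2,5) by unfold_locales
  let ?R = "orbit_equiv basis_perm {0..d}"
  obtain C and e :: nat where "C 0 = ?R `` {0}" "bij_betw C {0..e} ({0..d} // ?R)"
    using quotient_enumeration[OF finite_atLeastAtMost equiv_orbit_equiv[of "{0..d}" basis_perm], of 0]
    by auto
  moreover have "?R `` {0} = {0}"
    using orbit_equiv_fixed_point[OF bij_betw_imp_inj_on[OF bij_basis_perm] basis_perm_into]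
      basis_perm_0 by simp
  ultimately interpret orbit_fusion A d E \<psi> C e
    by unfold_locales simp_all
  show ?thesis using subscheme_orbit_fusion fixed_space_eq by blast
qed

end
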